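(* Let $G_1$ be a $(q_1,q_2)$-semi-regular bipartite graph with bipartition $V_1,V_2$, $|V_1|=n_1\le n_2=|V_2|$, and put $\nu_1=n_1+n_2$, $\epsilon_1=n_1q_1=n_2q_2$. Let $G_2$ be a $(q_3,q_4)$-semi-regular bipartite graph with bipartition $V_3,V_4$, $|V_3|=n_3\le n_4=|V_4|$, and put $\nu_2=n_3+n_4$, $\epsilon_2=n_3q_3=n_4q_4$. Write the adjacency spectra as multisets $$spec(G_1)=\{\pm\lambda_1,\dots,\pm\lambda_{k_1},\underbrace{0,\dots,0}_{\nu_1-2k_1}\},\qquad spec(G_2)=\{\pm\mu_1,\dots,\pm\mu_{k_2},\underbrace{0,\dots,0}_{\nu_2-2k_2}\},$$ where $k_1$ (resp. $k_2$) is the number of positive eigenvalues of $G_1$ (resp. $G_2$), $\sqrt{q_1q_2}=\lambda_1\ge\lambda_2\ge\dots\ge\lambda_{k_1}>0$ and $\sqrt{q_3q_4}=\mu_1\ge\mu_2\ge\dots\ge\mu_{k_2}>0$. Let $G=G_1\vee G_2$ and let $\theta_1,\theta_2,\theta_3,\theta_4$ be the zeros of $$f(\lambda)=\lambda^4-(q_1q_2+q_3q_4+\nu_1\nu_2)\lambda^2-2(\nu_1\epsilon_2+\nu_2\epsilon_1)\lambda+q_1q_2q_3q_4-4\epsilon_1\epsilon_2.$$ Then, as multisets, $$spec(G)=\{\theta_1,\theta_2,\theta_3,\theta_4,\pm\lambda_2,\dots,\pm\lambda_{k_1},\pm\mu_2,\dots,\pm\mu_{k_2},\underbrace{0,\d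ots,0}_{\nu_1-2k_1+\nu_2-2k_2}\}.$$
   Context: A bipartite graph with bipartition $(V_1,V_2)$ is $(q_1,q_2)$-semi-regular if every vertex of $V_1$ has degree $q_1$ and every vertex of $V_2$ has degree $q_2$ (here $q_1,q_2\ge 1$). The join $G_1\vee G_2$ has vertex set $V(G_1)\cup V(G_2)$ (disjoint) and edge set $E(G_1)\cup E(G_2)\cup\{uv: u\in V(G_1), v\in V(G_2)\}$. The spectrum $spec(G)$ of a graph is the multiset of eigenvalues of its adjacency matrix. It is a known fact that the spectrum of a $(q_1,q_2)$-semi-regular bipartite graph is symmetric about $0$ with largest eigenvalue $\sqrt{q_1q_2}$, so the displayed forms of $spec(G_1)$, $spec(G_2)$ are notation. *)

theory Defs
  imports "Jordan_Normal_Form.Char_Poly" "HOL-Computational_Algebra.Polynomial"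
begin

definition simple_graph :: "'a set \<Rightarrow> ('a \<Rightarrow> 'a \<Rightarrow> bool) \<Rightarrow> bool" where
  "simple_graph V E \<longleftrightarrow> finite V \<and> (\<forall>x y. E x y \<longrightarrow> x \<in> V \<and> y \<in> V)
     \<and> (\<forall>x y. E x y \<longrightarrow> E y x) \<and> (\<forall>x. \<not> E x x)"

definition degree :: "'a set \<Rightarrow> ('a \<Rightarrow> 'a \<Rightarrow> bool) \<Rightarrow> 'a \<Rightarrow> nat" where
  "degree V E v = card {u \<in> V. E v u}"

definition semiregular_bipartite ::
  "'a set \<Rightarrow> ('a \<Rightarrow> 'a \<Rightarrow> bool) \<Rightarrow> 'a set \<Rightarrow> 'a set \<Rightarrow> nat \<Rightarrow> nat \<Rightarrow> bool" where
  "semiregular_bipartite V E V1 V2 q1 q2 \<longleftrightarrow>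
     simple_graph V E \<and> V1 \<union> V2 = V \<and> V1 \<inter> V2 = {} \<and>
     (\<forall>x y. E x y \<longrightarrow> (x \<in> V1 \<and> y \<in> V2) \<or> (x \<in> V2 \<and> y \<in> V1)) \<and>
     q1 \<ge> 1 \<and> q2 \<ge> 1 \<and>
     (\<forall>v\<in>V1. degree V E v = q1) \<and> (\<forall>v\<in>V2. degree V E v = q2)"

text \<open>An (arbitrary) enumeration of a finite vertex set; the characteristic polynomial
  of the adjacency matrix does not depend on this choice.\<close>
definition vlist :: "'a set \<Rightarrow> 'a list" where
  "vlist V = (SOME xs. set xs = V \<and> distinct xs)"

definition adj_mat :: "'a set \<Rightarrow> ('a \<Rightarrow> 'a \<Rightarrow> bool) \<Rightarrow> complex mat" where
  "adj_mat V E = (let xs = vlist V in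
     mat (length xs) (length xs) (\<lambda>(i, j). if E (xs ! i) (xs ! j) then 1 else 0))"

definition spec :: "'a set \<Rightarrow> ('a \<Rightarrow> 'a \<Rightarrow> bool) \<Rightarrow> complex multiset" where
  "spec V E = proots (char_poly (adj_mat V E))"

definition join_vertices :: "'a set \<Rightarrow> 'b set \<Rightarrow> ('a + 'b) set" where
  "join_vertices V W = Inl ` V \<union> Inr ` W"

fun join_edges :: "'a set \<Rightarrow> ('a \<Rightarrow> 'a \<Rightarrow> bool) \<Rightarrow> 'b set \<Rightarrow> ('b \<Rightarrow> 'b \<Rightarrow> bool)
    \<Rightarrow> ('a + 'b) \<Rightarrow> ('a + 'b) \<Rightarrow> bool" where
  "join_edges V E W F (Inl x) (Inl y) = E x y"
| "join_edges V E W F (Inr x) (Inr y) = F x y"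
| "join_edges V E W F (Inl x) (Inr y) = (x \<in> V \<and> y \<in> W)"
| "join_edges V E W F (Inr x) (Inl y) = (x \<in> W \<and> y \<in> V)"

end

theory Submission
  imports Defs
begin

(* Vectors that are constant on each side of a (q1,q2)-semiregular bipartite graph are mapped to
   such vectors by its adjacency matrix A, (c1, c2) |-> (q1 c2, q2 c1). This gives the eigenvalues
   +-sqrt(q1 q2) and, for x^2 ~= q1 q2, the solution a of (x I - A) a = 1, whose entries sum to
   (nu x + 2 epsilon) / (x^2 - q1 q2). The adjacency matrix of the join is [[A1, J], [J, A2]] with
   all-ones blocks J, and eliminating J by means of these solutions gives
     det (x I - A) = det (x I - A1) det (x I - A2) (1 - s1 s2)
   with s1, s2 the two entry sums. Clearing denominators, char(G) (x^2 - q1 q2) (x^2 - q3 q4)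
   = f char(G1) char(G2), and x^2 - q1 q2 divides char(G1), x^2 - q3 q4 divides char(G2). *)

section \<open>Matrices\<close>

lemma det_permute_rows_cols:
  fixes A :: "'a::comm_ring_1 mat"
  assumes A: "A \<in> carrier_mat n n" and p: "p permutes {0..<n}"
  shows "det (mat n n (\<lambda>(i, j). A $$ (p i, p j))) = det A"
proof -
  define B where "B = mat n n (\<lambda>(i, j). A $$ (p i, j))"
  define C where "C = mat n n (\<lambda>(i, j). B\<^sup>T $$ (p i, j))"
  have B: "B \<in> carrier_mat n n" and C: "C \<in> carrier_mat n n" by (auto simp: B_def C_def)
  have pn: "i < n \<Longrightarrow> p i < n" for i using permutes_in_image[OF p] by simp
  have "mat n n (\<lambda>(i, j). A $$ (p i, p j)) = C\<^sup>T"
    by (rule eq_matI) (auto simp: B_def C_def pn)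
  then have "det (mat n n (\<lambda>(i, j). A $$ (p i, p j))) = det C"
    using det_transpose[OF C] by simp
  also have "\<dots> = signof p * det B"
    using det_permute_rows[of "B\<^sup>T" n p] p det_transpose[OF B] by (simp add: C_def B_def)
  also have "\<dots> = signof p * signof p * det A"
    using det_permute_rows[OF A p] by (simp add: B_def)
  also have "signof p * signof p = (1 :: 'a)"
    by (simp flip: of_int_mult)
  finally show ?thesis by simp
qed

lemma char_poly_permute_rows_cols:
  fixes A :: "'a::comm_ring_1 mat"
  assumes A: "A \<in> carrier_mat n n" and p: "p permutes {0..<n}"
  shows "char_poly (mat n n (\<lambda>(i, j). A $$ (p i, p j))) = char_poly A"
proof -
  have pn: "i < n \<Longrightarrow> p i < n" for i using permutes_in_image[OF p] by simp
  have "char_poly_matrix (mat n n (\<lambda>(i, j). A $$ (p i, p j)))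
      = mat n n (\<lambda>(i, j). char_poly_matrix A $$ (p i, p j))"
    using A by (intro eq_matI) (auto simp: char_poly_matrix_def pn permutes_inj[OF p, THEN inj_eq])
  then show ?thesis
    unfolding char_poly_def using det_permute_rows_cols[OF char_poly_matrix_closed[OF A] p] by simp
qed

lemma char_poly_reindex:
  fixes g :: "'a \<Rightarrow> 'a \<Rightarrow> 'b::comm_ring_1"
  assumes "distinct xs" "distinct ys" "set xs = set ys"
  shows "char_poly (mat (length xs) (length xs) (\<lambda>(i, j). g (xs ! i) (xs ! j)))
       = char_poly (mat (length ys) (length ys) (\<lambda>(i, j). g (ys ! i) (ys ! j)))"
proof -
  have "mset xs = mset ys" using assms by (simp add: set_eq_iff_mset_eq_distinct)
  then obtain p where p: "p permutes {..<length ys}" and xs: "permute_list p ys = xs"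
    by (rule mset_eq_permutation)
  have len: "length xs = length ys" using xs by auto
  have pn: "i < length ys \<Longrightarrow> p i < length ys" for i
    using permutes_in_image[OF p] by simp
  have xs_nth: "i < length ys \<Longrightarrow> xs ! i = ys ! p i" for i
    using xs p by (auto simp: permute_list_nth)
  have "mat (length xs) (length xs) (\<lambda>(i, j). g (xs ! i) (xs ! j))
      = mat (length ys) (length ys) (\<lambda>(i, j).
          mat (length ys) (length ys) (\<lambda>(i, j). g (ys ! i) (ys ! j)) $$ (p i, p j))"
    by (rule eq_matI) (auto simp: len xs_nth pn)
  with p show ?thesis by (simp add: char_poly_permute_rows_cols lessThan_atLeast0)
qed

lemma det_one_plus_rank_one:
  fixes u v :: "nat \<Rightarrow> 'a::idom"
  shows "det (1\<^sub>m n + mat n n (\<lambda>(i, j). u i * v j)) = 1 + (\<Sum>i<n. v i * u i)"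
proof -
  define U where "U = mat n 1 (\<lambda>(i, _). u i)"
  define Vt where "Vt = mat 1 n (\<lambda>(_, j). v j)"
  define P where "P = four_block_mat (1\<^sub>m n) U (- Vt) (1\<^sub>m 1)"
  define Q1 where "Q1 = four_block_mat (1\<^sub>m n) (0\<^sub>m n 1) Vt (1\<^sub>m 1)"
  define Q2 where "Q2 = four_block_mat (1\<^sub>m n) (- U) (0\<^sub>m 1 n) (1\<^sub>m 1)"
  have U: "U \<in> carrier_mat n 1" and Vt: "Vt \<in> carrier_mat 1 n" by (auto simp: U_def Vt_def)
  have P: "P \<in> carrier_mat (n + 1) (n + 1)"
    unfolding P_def using U Vt by (intro four_block_carrier_mat) auto
  have Q1: "Q1 \<in> carrier_mat (n + 1) (n + 1)"
    unfolding Q1_def using Vt by (intro four_block_carrier_mat) auto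
  have Q2: "Q2 \<in> carrier_mat (n + 1) (n + 1)"
    unfolding Q2_def using U by (intro four_block_carrier_mat) auto
  have "det Q1 = 1" unfolding Q1_def
    using Vt by (subst det_four_block_mat_upper_right_zero[of _ n _ 1]) auto
  moreover have
    "P * Q1 = four_block_mat (1\<^sub>m n + mat n n (\<lambda>(i, j). u i * v j)) U (0\<^sub>m 1 n) (1\<^sub>m 1)"
  proof -
    have "U * Vt = mat n n (\<lambda>(i, j). u i * v j)"
      using U Vt by (intro eq_matI) (auto simp: U_def Vt_def scalar_prod_def)
    then show ?thesis
      unfolding P_def Q1_def using U Vt by (subst mult_four_block_mat[of _ n n _ 1 _ 1]) auto
  qed
  ultimately have "det P = det (1\<^sub>m n + mat n n (\<lambda>(i, j). u i * v j))"
    using det_mult[OF P Q1] U by (simp add: det_four_block_mat_lower_left_zero[of _ n _ 1])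
  moreover have "det Q2 = 1" unfolding Q2_def
    using U by (subst det_four_block_mat_lower_left_zero[of _ n _ 1]) auto
  moreover have
    "P * Q2 = four_block_mat (1\<^sub>m n) (0\<^sub>m n 1) (- Vt) (mat 1 1 (\<lambda>_. 1 + (\<Sum>i<n. v i * u i)))"
  proof -
    have "Vt * U + 1\<^sub>m 1 = mat 1 1 (\<lambda>_. 1 + (\<Sum>i<n. v i * u i))"
      using U Vt by (intro eq_matI) (auto simp: U_def Vt_def scalar_prod_def atLeast0LessThan)
    moreover have "U + (- U) = 0\<^sub>m n 1" using U by (intro eq_matI) auto
    ultimately show ?thesis
      unfolding P_def Q2_def using U Vt by (subst mult_four_block_mat[of _ n n _ 1 _ 1]) auto
  qed
  ultimately show ?thesis
    using det_mult[OF P Q2] Vt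
    by (simp add: det_four_block_mat_upper_right_zero[of _ n _ 1] det_single)
qed

lemma mult_mat_repeated_col:
  assumes "X \<in> carrier_mat n k" and "a \<in> carrier_vec k"
  shows "X * mat k m (\<lambda>(i, _). a $ i) = mat n m (\<lambda>(i, _). (X *\<^sub>v a) $ i)"
  using assms by (intro eq_matI) (auto simp: scalar_prod_def)

(* Multiplying from the right by [[1, a 1^T], [0, 1]] clears the upper right block and turns the
   lower right one into X2 (1 - s b 1^T), with s the entry sum of a. *)
lemma det_four_block_mat_ones_coupling:
  fixes X1 X2 :: "'a::idom mat"
  assumes X1: "X1 \<in> carrier_mat n n" and X2: "X2 \<in> carrier_mat m m"
    and a: "a \<in> carrier_vec n" "X1 *\<^sub>v a = vec n (\<lambda>_. 1)"
    and b: "b \<in> carrier_vec m" "X2 *\<^sub>v b = vec m (\<lambda>_. 1)"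
  shows "det (four_block_mat X1 (- mat n m (\<lambda>_. 1)) (- mat m n (\<lambda>_. 1)) X2)
       = det X1 * det X2 * (1 - (\<Sum>i<n. a $ i) * (\<Sum>j<m. b $ j))"
proof -
  define sa where "sa = (\<Sum>i<n. a $ i)"
  define J1 where "J1 = (mat n m (\<lambda>_. 1) :: 'a mat)"
  define J2 where "J2 = (mat m n (\<lambda>_. 1) :: 'a mat)"
  define Am where "Am = mat n m (\<lambda>(i, _). a $ i)"
  define M where "M = four_block_mat X1 (- J1) (- J2) X2"
  define R where "R = four_block_mat (1\<^sub>m n) Am (0\<^sub>m m n) (1\<^sub>m m)"
  define Y where "Y = 1\<^sub>m m + mat m m (\<lambda>(i, j). (- sa * b $ i) * 1)"
  have J: "J1 \<in> carrier_mat n m" "J2 \<in> carrier_mat m n" and Am: "Am \<in> carrier_mat n m"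
    by (auto simp: J1_def J2_def Am_def)
  have M: "M \<in> carrier_mat (n + m) (n + m)" and R: "R \<in> carrier_mat (n + m) (n + m)"
    using X1 X2 J Am unfolding M_def R_def by (auto intro!: four_block_carrier_mat)
  have "det R = 1"
    unfolding R_def using Am by (subst det_four_block_mat_lower_left_zero[of _ n _ m]) auto
  have top_right: "X1 * Am + (- J1) * 1\<^sub>m m = 0\<^sub>m n m"
    using mult_mat_repeated_col[OF X1 a(1), of m] a(2) J
    by (intro eq_matI) (auto simp: Am_def J1_def)
  have bottom_right: "(- J2) * Am + X2 * 1\<^sub>m m = X2 * Y"
  proof -
    have "X2 * mat m m (\<lambda>(i, _). b $ i) = mat m m (\<lambda>_. 1)"
      using mult_mat_repeated_col[OF X2 b(1), of m] b(2) by auto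
    moreover have
      "mat m m (\<lambda>(i, j). (- sa * b $ i) * 1) = (- sa) \<cdot>\<^sub>m mat m m (\<lambda>(i, _). b $ i)"
      by (intro eq_matI) auto
    ultimately have "X2 * Y = X2 + (- sa) \<cdot>\<^sub>m mat m m (\<lambda>_. 1)"
      using X2
        mult_add_distrib_mat[OF X2 one_carrier_mat, where C = "(- sa) \<cdot>\<^sub>m mat m m (\<lambda>(i, _). b $ i)"]
        mult_smult_distrib[OF X2, where B = "mat m m (\<lambda>(i, _). b $ i)" and nc = m and k = "- sa"]
      by (simp add: Y_def)
    moreover have "(- J2) * Am = (- sa) \<cdot>\<^sub>m mat m m (\<lambda>_. 1)"
      using J Am
      by (intro eq_matI) (auto simp: J2_def Am_def sa_def scalar_prod_def lessThan_atLeast0)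
    ultimately show ?thesis using X2 by (auto intro!: eq_matI)
  qed
  have "M * R = four_block_mat X1 (0\<^sub>m n m) (- J2) (X2 * Y)"
    unfolding M_def R_def
    using X1 X2 J Am top_right bottom_right by (subst mult_four_block_mat[of _ n n _ m _ m]) auto
  then have "det M = det X1 * det (X2 * Y)"
    using det_mult[OF M R] \<open>det R = 1\<close> X1 X2 J
    by (simp add: det_four_block_mat_upper_right_zero[of _ n _ m] Y_def)
  also have "det (X2 * Y) = det X2 * (1 - sa * (\<Sum>j<m. b $ j))"
    using det_mult[OF X2, of Y] det_one_plus_rank_one[of m "\<lambda>i. - sa * b $ i" "\<lambda>_. 1"]
    by (simp add: Y_def sum_distrib_left sum_negf)
  finally show ?thesis by (simp add: M_def J1_def J2_def sa_def)
qed

lemma neg_char_matrix_four_block_mat: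
  fixes A1 :: "'a::field mat"
  assumes "A1 \<in> carrier_mat n n" "A2 \<in> carrier_mat m m"
    and "B \<in> carrier_mat n m" "C \<in> carrier_mat m n"
  shows "- char_matrix (four_block_mat A1 B C A2) x
       = four_block_mat (- char_matrix A1 x) (- B) (- C) (- char_matrix A2 x)"
  using assms by (intro eq_matI) (auto simp: char_matrix_def)

lemma neg_char_matrix_mult_vec:
  fixes A :: "'a::field mat"
  assumes A: "A \<in> carrier_mat n n" and v: "v \<in> carrier_vec n"
  shows "- char_matrix A x *\<^sub>v v = x \<cdot>\<^sub>v v - A *\<^sub>v v"
proof -
  have "- char_matrix A x = x \<cdot>\<^sub>m 1\<^sub>m n - A"
    using A by (intro eq_matI) (auto simp: char_matrix_def)
  moreover have "(x \<cdot>\<^sub>m 1\<^sub>m n) *\<^sub>v v = x \<cdot>\<^sub>v v"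
  proof -
    have "x \<cdot>\<^sub>v v = x \<cdot>\<^sub>v (1\<^sub>m n *\<^sub>v v)" using v by auto
    also have "\<dots> = (x \<cdot>\<^sub>m 1\<^sub>m n) *\<^sub>v v" using v by auto
    finally show ?thesis ..
  qed
  ultimately show ?thesis
    using A v by (simp add: minus_mult_distrib_mat_vec[of _ n n])
qed

section \<open>Polynomials\<close>

lemma poly_eq_by_eval_off_roots:
  fixes p q r :: "'a::{idom, ring_char_0} poly"
  assumes "q \<noteq> 0" and "\<And>x. poly q x \<noteq> 0 \<Longrightarrow> poly p x = poly r x"
  shows "p = r"
proof -
  have "poly ((p - r) * q) x = 0" for x
    using assms(2)[of x] by (cases "poly q x = 0") auto
  then have "(p - r) * q = 0" using poly_all_0_iff_0 by blast
  with assms(1) show ?thesis by simp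
qed

lemma proots_pure_quadratic:
  fixes l c :: "'a::idom"
  assumes "l\<^sup>2 = c"
  shows "proots [:-c, 0, 1:] = {#l, -l#}"
proof -
  have "[:-c, 0, 1:] = [:-l, 1:] * [:l, 1:]"
    using assms by (simp add: power2_eq_square)
  then show ?thesis by (simp only:) (subst proots_mult; simp)
qed

lemma proots_of_cross_mult_eq:
  fixes p f q1 q2 d1 d2 :: "'a::idom poly"
  assumes eq: "p * (d1 * d2) = f * q1 * q2" and "d1 dvd q1" "d2 dvd q2"
    and "p \<noteq> 0" "d1 \<noteq> 0" "d2 \<noteq> 0"
  shows "proots p = proots f + (proots q1 - proots d1) + (proots q2 - proots d2)"
proof -
  obtain g1 g2 where g1: "q1 = d1 * g1" and g2: "q2 = d2 * g2"
    using assms(2,3) by (auto elim!: dvdE)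
  have "p * (d1 * d2) = (f * g1 * g2) * (d1 * d2)"
    unfolding eq g1 g2 by (simp only: mult.assoc mult.left_commute mult.commute)
  then have p: "p = f * g1 * g2" using assms(5,6) by simp
  then have "f \<noteq> 0" "g1 \<noteq> 0" "g2 \<noteq> 0" using assms(4) by auto
  then show ?thesis using assms(5,6) by (simp add: p g1 g2 proots_mult)
qed

section \<open>Adjacency matrices\<close>

lemma vlist:
  assumes "finite V"
  shows "set (vlist V) = V" and "distinct (vlist V)" and "length (vlist V) = card V"
proof -
  have "\<exists>xs. set xs = V \<and> distinct xs" using finite_distinct_list[OF assms] by blast
  from someI_ex[OF this] show "set (vlist V) = V" "distinct (vlist V)" unfolding vlist_def by auto
  then show "length (vlist V) = card V" using distinct_card by metis
qed

lemma sum_vlist: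
  assumes "finite V"
  shows "(\<Sum>i<card V. h (vlist V ! i)) = sum h V"
proof -
  have "(\<Sum>i<card V. h (vlist V ! i)) = sum_list (map h (vlist V))"
    using vlist(3)[OF assms] by (simp add: sum_list_sum_nth lessThan_atLeast0)
  also have "\<dots> = sum h V"
    using vlist(1,2)[OF assms] by (simp add: sum_list_distinct_conv_sum_set)
  finally show ?thesis .
qed

lemma adj_mat_carrier:
  assumes "finite V"
  shows "adj_mat V E \<in> carrier_mat (card V) (card V)"
  using vlist(3)[OF assms] by (simp add: adj_mat_def Let_def)

lemma char_poly_adj_mat_nonzero:
  assumes "finite V"
  shows "char_poly (adj_mat V E) \<noteq> 0"
  using degree_monic_char_poly[OF adj_mat_carrier[OF assms, of E]] by (intro notI) simp

definition side_vec :: "'a set \<Rightarrow> 'a set \<Rightarrow> 'b \<Rightarrow> 'b \<Rightarrow> 'b vec" where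
  "side_vec V V1 c1 c2 = vec (card V) (\<lambda>i. if vlist V ! i \<in> V1 then c1 else c2)"

lemma side_vec_carrier: "side_vec V V1 c1 c2 \<in> carrier_vec (card V)"
  by (simp add: side_vec_def)

lemma smult_side_vec: "c \<cdot>\<^sub>v side_vec V V1 c1 c2 = side_vec V V1 (c * c1) (c * c2)"
  by (auto simp: side_vec_def)

section \<open>Semiregular bipartite graphs\<close>

(* (x I - A)^-1 (1, ..., 1) for the adjacency matrix A of a (q1,q2)-semiregular bipartite graph *)
definition resolvent_vec :: "'a set \<Rightarrow> 'a set \<Rightarrow> nat \<Rightarrow> nat \<Rightarrow> complex \<Rightarrow> complex vec" where
  "resolvent_vec V V1 q1 q2 x =
     side_vec V V1 ((x + of_nat q1) / (x\<^sup>2 - of_nat (q1 * q2)))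
                   ((x + of_nat q2) / (x\<^sup>2 - of_nat (q1 * q2)))"

context
  fixes V V1 V2 :: "'a set" and E :: "'a \<Rightarrow> 'a \<Rightarrow> bool" and q1 q2 :: nat
  assumes G: "semiregular_bipartite V E V1 V2 q1 q2"
begin

lemma semiregular_bipartiteD:
  shows "finite V" "V1 \<union> V2 = V" "V1 \<inter> V2 = {}" "q1 \<ge> 1" "q2 \<ge> 1"
    and "\<And>x y. E x y \<Longrightarrow> E y x"
    and "\<And>x y. E x y \<Longrightarrow> (x \<in> V1 \<and> y \<in> V2) \<or> (x \<in> V2 \<and> y \<in> V1)"
    and "\<And>v. v \<in> V1 \<Longrightarrow> card {u \<in> V. E v u} = q1"
    and "\<And>v. v \<in> V2 \<Longrightarrow> card {u \<in> V. E v u} = q2"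
  using G unfolding semiregular_bipartite_def simple_graph_def degree_def by auto

lemma card_bipartition: "card V = card V1 + card V2"
  using semiregular_bipartiteD(1-3) by (metis card_Un_disjoint finite_Un)

lemma edge_crosses: "E x y \<Longrightarrow> x \<in> V1 \<longleftrightarrow> y \<in> V2"
  using semiregular_bipartiteD(3,7) by blast

lemma card_mult_degree_eq: "card V1 * q1 = card V2 * q2"
proof -
  note G' = semiregular_bipartiteD
  have fin: "finite V1" "finite V2" using G'(1,2) by auto
  define S where "S = Sigma V1 (\<lambda>v. {u \<in> V. E v u})"
  have "prod.swap ` S = Sigma V2 (\<lambda>u. {v \<in> V. E u v})"
  proof (intro equalityI subsetI)
    fix p assume "p \<in> prod.swap ` S"
    then obtain v u where "v \<in> V1" "u \<in> V" "E v u" "p = (u, v)" by (auto simp: S_def)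
    then show "p \<in> Sigma V2 (\<lambda>u. {v \<in> V. E u v})"
      using edge_crosses[of v u] G'(2,6) by auto
  next
    fix p assume "p \<in> Sigma V2 (\<lambda>u. {v \<in> V. E u v})"
    then obtain u v where "u \<in> V2" "v \<in> V" "E u v" "p = (u, v)" by auto
    then have "(v, u) \<in> S" using edge_crosses[of v u] G'(2) G'(6)[of u v] by (auto simp: S_def)
    then show "p \<in> prod.swap ` S" using \<open>p = (u, v)\<close> by force
  qed
  moreover have "card (prod.swap ` S) = card S" by (rule card_image) simp
  ultimately have "card (Sigma V2 (\<lambda>u. {v \<in> V. E u v})) = card S" by simp
  also have "card S = card V1 * q1"
    unfolding S_def using fin G'(1,8) by simp
  finally show ?thesis
    using fin G'(1,9) by simp
qed

lemma adj_mat_mult_side_vec: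
  "adj_mat V E *\<^sub>v side_vec V V1 c1 c2 = side_vec V V1 (of_nat q1 * c2) (of_nat q2 * c1)"
proof (rule eq_vecI)
  note G' = semiregular_bipartiteD
  note xs = vlist[OF G'(1)]
  fix i assume "i < dim_vec (side_vec V V1 (of_nat q1 * c2) (of_nat q2 * c1))"
  then have i: "i < card V" by (simp add: side_vec_def)
  define v where "v = vlist V ! i"
  have v: "v \<in> V" using i xs unfolding v_def by (metis nth_mem)
  let ?h = "\<lambda>u. if u \<in> V1 then c1 else c2"
  have "(adj_mat V E *\<^sub>v side_vec V V1 c1 c2) $ i
      = (\<Sum>k<card V. (if E v (vlist V ! k) then ?h (vlist V ! k) else 0))"
    using i xs(3) adj_mat_carrier[OF G'(1), of E]
    by (auto simp: side_vec_def adj_mat_def Let_def scalar_prod_def lessThan_atLeast0 v_def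
        intro!: sum.cong)
  also have "\<dots> = (\<Sum>u\<in>V. if E v u then ?h u else 0)"
    using sum_vlist[OF G'(1), of "\<lambda>u. if E v u then ?h u else 0"] .
  also have "\<dots> = (\<Sum>u\<in>{u \<in> V. E v u}. ?h u)"
    using G'(1) by (simp add: sum.inter_filter)
  also have "\<dots> = (if v \<in> V1 then of_nat q1 * c2 else of_nat q2 * c1)"
  proof (cases "v \<in> V1")
    case True
    then have "(\<Sum>u\<in>{u \<in> V. E v u}. ?h u) = (\<Sum>u\<in>{u \<in> V. E v u}. c2)"
      using G'(3,7) by (intro sum.cong) auto
    then show ?thesis using True G'(8) by simp
  next
    case False
    then have "v \<in> V2" using v G'(2) by auto
    then have "(\<Sum>u\<in>{u \<in> V. E v u}. ?h u) = (\<Sum>u\<in>{u \<in> V. E v u}. c1)"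
      using G'(3,7) by (intro sum.cong) auto
    then show ?thesis using False \<open>v \<in> V2\<close> G'(9) by simp
  qed
  finally show "(adj_mat V E *\<^sub>v side_vec V V1 c1 c2) $ i
      = side_vec V V1 (of_nat q1 * c2) (of_nat q2 * c1) $ i"
    using i by (simp add: side_vec_def v_def)
qed (use adj_mat_carrier[OF semiregular_bipartiteD(1), of E] in \<open>simp add: side_vec_def\<close>)

lemma sum_side_vec:
  "(\<Sum>i<card V. side_vec V V1 c1 c2 $ i) = of_nat (card V1) * c1 + of_nat (card V2) * c2"
proof -
  note G' = semiregular_bipartiteD
  have "(\<Sum>i<card V. side_vec V V1 c1 c2 $ i) = (\<Sum>u\<in>V. if u \<in> V1 then c1 else c2)"
    using sum_vlist[OF G'(1), of "\<lambda>u. if u \<in> V1 then c1 else c2"] by (simp add: side_vec_def)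
  also have "\<dots> = (\<Sum>u\<in>V1. if u \<in> V1 then c1 else c2)
                  + (\<Sum>u\<in>V2. if u \<in> V1 then c1 else c2)"
    using G'(1-3) by (metis finite_Un sum.union_disjoint)
  also have "(\<Sum>u\<in>V2. if u \<in> V1 then c1 else c2) = (\<Sum>u\<in>V2. c2)"
    using G'(3) by (intro sum.cong) auto
  finally show ?thesis by simp
qed

lemma sum_resolvent_vec:
  "(\<Sum>i<card V. resolvent_vec V V1 q1 q2 x $ i)
     = (of_nat (card V) * x + 2 * of_nat (card V1 * q1)) / (x\<^sup>2 - of_nat (q1 * q2))"
proof -
  have "of_nat (card V2 * q2) = (of_nat (card V1 * q1) :: complex)"
    using card_mult_degree_eq by simp
  then show ?thesis
    unfolding resolvent_vec_def sum_side_vec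
    by (simp add: card_bipartition add_divide_distrib algebra_simps)
qed

lemma char_poly_adj_mat_root:
  assumes "V \<noteq> {}" and l: "l\<^sup>2 = of_nat (q1 * q2)"
  shows "poly (char_poly (adj_mat V E)) l = 0"
proof -
  note G' = semiregular_bipartiteD
  define v where "v = side_vec V V1 (of_nat q1) l"
  have l0: "l \<noteq> 0" using l G'(4,5) by auto
  have "adj_mat V E *\<^sub>v v = l \<cdot>\<^sub>v v"
    using l by (simp add: v_def adj_mat_mult_side_vec smult_side_vec power2_eq_square mult.commute)
  moreover have "v \<noteq> 0\<^sub>v (card V)"
  proof
    assume "v = 0\<^sub>v (card V)"
    moreover have "card V > 0" using assms(1) G'(1) by (simp add: card_gt_0_iff)
    ultimately have "v $ 0 = 0" by simp
    then show False
      using l0 G'(4) \<open>card V > 0\<close> by (auto simp: v_def side_vec_def split: if_splits)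
  qed
  ultimately have "eigenvector (adj_mat V E) v l"
    using adj_mat_carrier[OF G'(1), of E] by (simp add: eigenvector_def v_def side_vec_def)
  then show ?thesis
    using eigenvalue_root_char_poly[OF adj_mat_carrier[OF G'(1), of E]] by (auto simp: eigenvalue_def)
qed

lemma char_poly_adj_mat_dvd:
  assumes "V \<noteq> {}"
  shows "[:- of_nat (q1 * q2), 0, 1:] dvd char_poly (adj_mat V E)"
proof -
  define l where "l = complex_of_real (sqrt (real (q1 * q2)))"
  have l: "l\<^sup>2 = of_nat (q1 * q2)" by (simp add: l_def flip: of_real_power)
  then have "l \<noteq> 0" using semiregular_bipartiteD(4,5) by auto
  obtain h where h: "char_poly (adj_mat V E) = [:-l, 1:] * h"
    using char_poly_adj_mat_root[OF assms l] by (auto simp: poly_eq_0_iff_dvd)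
  have "poly (char_poly (adj_mat V E)) (-l) = 0"
    using char_poly_adj_mat_root[OF assms] l by simp
  then have "poly h (-l) = 0" using \<open>l \<noteq> 0\<close> by (simp add: h)
  then have "[:-l, 1:] * [:l, 1:] dvd char_poly (adj_mat V E)"
    unfolding h by (intro mult_dvd_mono) (auto simp: poly_eq_0_iff_dvd)
  also have "[:-l, 1:] * [:l, 1:] = [:- of_nat (q1 * q2), 0, 1:]"
    using l by (simp add: power2_eq_square)
  finally show ?thesis .
qed

lemma neg_char_matrix_mult_side_vec:
  "- char_matrix (adj_mat V E) x *\<^sub>v side_vec V V1 c1 c2
     = side_vec V V1 (x * c1 - of_nat q1 * c2) (x * c2 - of_nat q2 * c1)"
proof -
  have "- char_matrix (adj_mat V E) x *\<^sub>v side_vec V V1 c1 c2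
      = x \<cdot>\<^sub>v side_vec V V1 c1 c2 - side_vec V V1 (of_nat q1 * c2) (of_nat q2 * c1)"
    using neg_char_matrix_mult_vec[OF adj_mat_carrier[OF semiregular_bipartiteD(1), of E]
        side_vec_carrier, of x]
    by (simp add: adj_mat_mult_side_vec)
  then show ?thesis by (auto simp: side_vec_def)
qed


lemma neg_char_matrix_mult_resolvent_vec:
  assumes "x\<^sup>2 \<noteq> of_nat (q1 * q2)"
  shows "- char_matrix (adj_mat V E) x *\<^sub>v resolvent_vec V V1 q1 q2 x = vec (card V) (\<lambda>_. 1)"
proof -
  define d where "d = x\<^sup>2 - of_nat (q1 * q2)"
  have "d \<noteq> 0" using assms by (simp add: d_def)
  have "x * ((x + of_nat q1) / d) - of_nat q1 * ((x + of_nat q2) / d) = d / d"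
    "x * ((x + of_nat q2) / d) - of_nat q2 * ((x + of_nat q1) / d) = d / d"
    using \<open>d \<noteq> 0\<close>
    by (simp_all add: field_simps) (simp_all add: d_def algebra_simps power2_eq_square)
  then show ?thesis
    unfolding resolvent_vec_def d_def[symmetric] neg_char_matrix_mult_side_vec
    using \<open>d \<noteq> 0\<close> by (simp add: side_vec_def)
qed
end

section \<open>Joins\<close>

lemma char_poly_adj_mat_join:
  assumes V: "finite V" and W: "finite W"
  shows "char_poly (adj_mat (join_vertices V W) (join_edges V E W F))
       = char_poly (four_block_mat (adj_mat V E) (mat (card V) (card W) (\<lambda>_. 1))
                                   (mat (card W) (card V) (\<lambda>_. 1)) (adj_mat W F))"
proof -
  define ys where "ys = map Inl (vlist V) @ map Inr (vlist W)"
  define g where "g = (\<lambda>u v. if join_edges V E W F u v then 1 else (0 :: complex))"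
  have fin: "finite (join_vertices V W)" using V W by (simp add: join_vertices_def)
  have ys: "distinct ys" "set ys = join_vertices V W"
    using vlist[OF V] vlist[OF W] by (auto simp: ys_def join_vertices_def distinct_map inj_on_def)
  have "char_poly (adj_mat (join_vertices V W) (join_edges V E W F))
      = char_poly (mat (length ys) (length ys) (\<lambda>(i, j). g (ys ! i) (ys ! j)))"
    unfolding adj_mat_def Let_def g_def
    by (rule char_poly_reindex) (use vlist[OF fin] ys in auto)
  also have "mat (length ys) (length ys) (\<lambda>(i, j). g (ys ! i) (ys ! j))
      = four_block_mat (adj_mat V E) (mat (card V) (card W) (\<lambda>_. 1))
                       (mat (card W) (card V) (\<lambda>_. 1)) (adj_mat W F)"
    using vlist[OF V] vlist[OF W] nth_mem[of _ "vlist V"] nth_mem[of _ "vlist W"]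
    by (intro eq_matI) (auto simp: ys_def g_def adj_mat_def Let_def nth_append)
  finally show ?thesis .
qed

lemma poly_char_poly_adj_mat_join:
  assumes V: "finite V" and W: "finite W"
    and a: "a \<in> carrier_vec (card V)"
      "- char_matrix (adj_mat V E) x *\<^sub>v a = vec (card V) (\<lambda>_. 1)"
    and b: "b \<in> carrier_vec (card W)"
      "- char_matrix (adj_mat W F) x *\<^sub>v b = vec (card W) (\<lambda>_. 1)"
  shows "poly (char_poly (adj_mat (join_vertices V W) (join_edges V E W F))) x
       = poly (char_poly (adj_mat V E)) x * poly (char_poly (adj_mat W F)) x
           * (1 - (\<Sum>i<card V. a $ i) * (\<Sum>j<card W. b $ j))"
proof -
  note A1 = adj_mat_carrier[OF V, of E] and A2 = adj_mat_carrier[OF W, of F]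
  have "poly (char_poly (adj_mat (join_vertices V W) (join_edges V E W F))) x
      = det (- char_matrix (four_block_mat (adj_mat V E) (mat (card V) (card W) (\<lambda>_. 1))
                                           (mat (card W) (card V) (\<lambda>_. 1)) (adj_mat W F)) x)"
    using A1 A2 V W by (simp add: char_poly_adj_mat_join char_poly_matrix[of _ "card V + card W"])
  also have "\<dots> = det (four_block_mat
      (- char_matrix (adj_mat V E) x) (- mat (card V) (card W) (\<lambda>_. 1))
      (- mat (card W) (card V) (\<lambda>_. 1)) (- char_matrix (adj_mat W F) x))"
    using A1 A2 by (simp add: neg_char_matrix_four_block_mat)
  also have "\<dots> = det (- char_matrix (adj_mat V E) x) * det (- char_matrix (adj_mat W F) x)
                     * (1 - (\<Sum>i<card V. a $ i) * (\<Sum>j<card W. b $ j))"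
    using A1 A2 a b by (intro det_four_block_mat_ones_coupling) auto
  also have "det (- char_matrix (adj_mat V E) x) = poly (char_poly (adj_mat V E)) x"
    using A1 by (simp add: char_poly_matrix)
  also have "det (- char_matrix (adj_mat W F) x) = poly (char_poly (adj_mat W F)) x"
    using A2 by (simp add: char_poly_matrix)
  finally show ?thesis .
qed

lemma poly_char_poly_join_semiregular:
  fixes x :: complex
  assumes G1: "semiregular_bipartite V E V1 V2 q1 q2"
    and G2: "semiregular_bipartite W F V3 V4 q3 q4"
    and d1: "x\<^sup>2 \<noteq> of_nat (q1 * q2)" and d2: "x\<^sup>2 \<noteq> of_nat (q3 * q4)"
  shows "poly (char_poly (adj_mat (join_vertices V W) (join_edges V E W F))) x
           * ((x\<^sup>2 - of_nat (q1 * q2)) * (x\<^sup>2 - of_nat (q3 * q4)))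
       = poly (char_poly (adj_mat V E)) x * poly (char_poly (adj_mat W F)) x
           * ((x\<^sup>2 - of_nat (q1 * q2)) * (x\<^sup>2 - of_nat (q3 * q4))
              - (of_nat (card V) * x + 2 * of_nat (card V1 * q1))
                * (of_nat (card W) * x + 2 * of_nat (card V3 * q3)))"
proof -
  define D1 D2 where "D1 = x\<^sup>2 - of_nat (q1 * q2)" and "D2 = x\<^sup>2 - of_nat (q3 * q4)"
  have "D1 \<noteq> 0" "D2 \<noteq> 0" using d1 d2 by (simp_all add: D1_def D2_def)
  have "poly (char_poly (adj_mat (join_vertices V W) (join_edges V E W F))) x
      = poly (char_poly (adj_mat V E)) x * poly (char_poly (adj_mat W F)) x
          * (1 - (\<Sum>i<card V. resolvent_vec V V1 q1 q2 x $ i)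
               * (\<Sum>j<card W. resolvent_vec W V3 q3 q4 x $ j))"
    by (intro poly_char_poly_adj_mat_join semiregular_bipartiteD(1)[OF G1]
        semiregular_bipartiteD(1)[OF G2] neg_char_matrix_mult_resolvent_vec[OF G1 d1]
        neg_char_matrix_mult_resolvent_vec[OF G2 d2])
      (simp_all add: resolvent_vec_def side_vec_carrier)
  with \<open>D1 \<noteq> 0\<close> \<open>D2 \<noteq> 0\<close> show ?thesis
    unfolding sum_resolvent_vec[OF G1] sum_resolvent_vec[OF G2] D1_def[symmetric] D2_def[symmetric]
    by (simp add: field_simps)
qed

lemma char_poly_join_semiregular:
  assumes G1: "semiregular_bipartite V E V1 V2 q1 q2"
    and G2: "semiregular_bipartite W F V3 V4 q3 q4"
  defines "D1 \<equiv> [:- of_nat (q1 * q2), 0, 1:]" and "D2 \<equiv> [:- of_nat (q3 * q4), 0, 1:]"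
    and "N \<equiv> [:2 * of_nat (card V1 * q1), of_nat (card V):] * [:2 * of_nat (card V3 * q3), of_nat (card W):]"
  shows "char_poly (adj_mat (join_vertices V W) (join_edges V E W F)) * (D1 * D2)
       = (D1 * D2 - N) * char_poly (adj_mat V E) * char_poly (adj_mat W F)" (is "?lhs = ?rhs")
proof (rule poly_eq_by_eval_off_roots)
  show "D1 * D2 \<noteq> 0" by (simp add: D1_def D2_def)
next
  fix x :: complex
  assume "poly (D1 * D2) x \<noteq> 0"
  then have "x\<^sup>2 \<noteq> of_nat (q1 * q2)" "x\<^sup>2 \<noteq> of_nat (q3 * q4)"
    by (auto simp: D1_def D2_def power2_eq_square)
  from poly_char_poly_join_semiregular[OF G1 G2 this] show "poly ?lhs x = poly ?rhs x"
    by (simp add: D1_def D2_def N_def power2_eq_square algebra_simps)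
qed

lemma quartic_eq_factored:
  "([: of_int (int (q1 * q2 * q3 * q4) - 4 * int (e1 * e2)), - 2 * of_nat (n1 * e2 + n2 * e1),
       - of_nat (q1 * q2 + q3 * q4 + n1 * n2), 0, 1 :] :: complex poly)
   = [:- of_nat (q1 * q2), 0, 1:] * [:- of_nat (q3 * q4), 0, 1:]
       - [:2 * of_nat e1, of_nat n1:] * [:2 * of_nat e2, of_nat n2:]"
  unfolding poly_eq_poly_eq_iff[symmetric] by (rule ext) (simp add: algebra_simps)

theorem theorem3p1:
  fixes V V1 V2 :: "'a set" and E :: "'a \<Rightarrow> 'a \<Rightarrow> bool"
    and W V3 V4 :: "'b set" and F :: "'b \<Rightarrow> 'b \<Rightarrow> bool"
    and q1 q2 q3 q4 :: nat
  assumes G1: "semiregular_bipartite V E V1 V2 q1 q2" and "V \<noteq> {}"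
    and n12: "card V1 \<le> card V2"
    and G2: "semiregular_bipartite W F V3 V4 q3 q4" and "W \<noteq> {}"
    and n34: "card V3 \<le> card V4"
  shows "let n1 = card V1; n2 = card V2; n3 = card V3; n4 = card V4;
             \<nu>1 = n1 + n2; \<epsilon>1 = n1 * q1; \<nu>2 = n3 + n4; \<epsilon>2 = n3 * q3;
             f = [: of_int (int (q1*q2*q3*q4) - 4 * int (\<epsilon>1 * \<epsilon>2)),
                    - 2 * of_nat (\<nu>1 * \<epsilon>2 + \<nu>2 * \<epsilon>1),
                    - of_nat (q1*q2 + q3*q4 + \<nu>1*\<nu>2), 0, 1 :] :: complex poly;
             lam1 = complex_of_real (sqrt (real (q1*q2)));
             mu1 = complex_of_real (sqrt (real (q3*q4)))
         in spec (join_vertices V W) (join_edges V E W F)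
            = proots f + (spec V E - {#lam1, -lam1#}) + (spec W F - {#mu1, -mu1#})"
proof -
  \<comment> \<open>The hypotheses \<open>n12\<close> and \<open>n34\<close> only fix the naming of the sides.\<close>
  let ?D1 = "[:- of_nat (q1 * q2), 0, 1:] :: complex poly"
    and ?D2 = "[:- of_nat (q3 * q4), 0, 1:] :: complex poly"
    and ?N = "[:2 * of_nat (card V1 * q1), of_nat (card V):]
              * [:2 * of_nat (card V3 * q3), of_nat (card W):] :: complex poly"
  have "spec (join_vertices V W) (join_edges V E W F)
      = proots (?D1 * ?D2 - ?N) + (spec V E - proots ?D1) + (spec W F - proots ?D2)"
    unfolding spec_def using G1 G2 \<open>V \<noteq> {}\<close> \<open>W \<noteq> {}\<close>
    by (intro proots_of_cross_mult_eq char_poly_join_semiregular char_poly_adj_mat_dvd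
        char_poly_adj_mat_nonzero) (auto simp: join_vertices_def semiregular_bipartiteD(1))
  moreover have "(complex_of_real (sqrt (real (q1 * q2))))\<^sup>2 = of_nat (q1 * q2)"
    and "(complex_of_real (sqrt (real (q3 * q4))))\<^sup>2 = of_nat (q3 * q4)"
    by (simp_all flip: of_real_power)
  ultimately show ?thesis
    unfolding Let_def quartic_eq_factored card_bipartition[OF G1] card_bipartition[OF G2]
    by (simp only: proots_pure_quadratic)
qed

end
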